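(* Let $\tau\in\mathbb C$ with $\mathrm{Im}(\tau)>0$ and set $q=\exp\bigl(\pi i\,\frac{4\tau-1}{4\tau}\bigr)$ (so $|q|<1$). With $\epsilon(q)=\prod_{n\ge1}(1+q^n)$ and $\bar\epsilon(q)=\epsilon(-q)$, one has $$2\epsilon(q)^2\bar\epsilon(q)^2-\left(\frac{\theta_2(0|2\tau)}{\theta_3(0|2\tau)}\right)^2\bigl(\epsilon(q)^4+\bar\epsilon(q)^4\bigr)=0.$$
   Context: For $\tau$ in the upper half plane and $z\in\mathbb C$, with $q_\tau=e^{\pi i\tau}$, $q_z=e^{\pi i z}$, the Jacobi theta functions are $\theta_2(z|\tau)=\sum_{n\in\mathbb Z}q_\tau^{(n+\frac12)^2}q_z^{2n+1}$ and $\theta_3(z|\tau)=\sum_{n\in\mathbb Z}q_\tau^{n^2}q_z^{2n}$, where $q_\tau^{c}$ means $e^{\pi i\tau c}$. *)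

theory Defs
  imports "HOL-Analysis.Analysis"
begin

definition theta2 :: "complex \<Rightarrow> complex \<Rightarrow> complex" where
  "theta2 z \<tau> = (\<Sum>\<^sub>\<infinity>n::int. exp (pi * \<i> * \<tau> * (of_int n + 1/2)^2) * exp (pi * \<i> * z * (2 * of_int n + 1)))"

definition theta3 :: "complex \<Rightarrow> complex \<Rightarrow> complex" where
  "theta3 z \<tau> = (\<Sum>\<^sub>\<infinity>n::int. exp (pi * \<i> * \<tau> * (of_int n)^2) * exp (pi * \<i> * z * (2 * of_int n)))"

definition eps :: "complex \<Rightarrow> complex" where
  "eps q = (\<Prod>n. (1 + q ^ (Suc n)))"

definition eps_bar :: "complex \<Rightarrow> complex" where
  "eps_bar q = eps (- q)"

end

theory Submission
  imports Defs "HOL-Complex_Analysis.Complex_Analysis"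
begin

text \<open>
  Put \<sigma> = -1/(4\<tau>) and p = exp(\<pi>i\<sigma>), so that q = -p. An entire function F with
  F(z + 1) = F(z) and F(z + t) = exp(-\<pi>it - 2\<pi>iz) F(z) has Fourier coefficients
  c(n) = exp(\<pi>itn^2) c(0), hence equals c(0) theta3(z|t). Applied to exp(-\<pi>iz^2/t) theta3(z/t|-1/t)
  this gives the modular transformation theta2(0|t)/theta3(0|t) = theta3(1/2|-1/t)/theta3(0|-1/t).
  Applied to the product of (1 + p^(2n+1) e^(2\<pi>iz)) (1 + p^(2n+1) e^(-2\<pi>iz)) over n it gives
  a/b = (\<Prod>(1 - p^(2n+1)) / \<Prod>(1 + p^(2n+1)))^2 for a = theta3(0|\<sigma>), b = theta3(1/2|\<sigma>), and
  with Euler's identity \<epsilon>(p) \<Prod>(1 - p^(2n+1)) = \<epsilon>(-p) \<Prod>(1 + p^(2n+1)) this becomes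
  a \<epsilon>(q)^2 = b \<epsilon>(-q)^2. Regrouping the double series of a product of two theta series along
  m + n and m - n gives a^2 + b^2 = 2A^2 and ab = B^2 for A = theta3(0|2\<sigma>), B = theta3(1/2|2\<sigma>),
  and since theta2(0|2\<tau>)/theta3(0|2\<tau>) = B/A the claim becomes a polynomial identity.
\<close>

section \<open>The theta series\<close>

definition theta3_term :: "complex \<Rightarrow> complex \<Rightarrow> int \<Rightarrow> complex" where
  "theta3_term t z n = exp (pi * \<i> * t * (of_int n)^2) * exp (pi * \<i> * z * (2 * of_int n))"

lemma theta3_eq_infsum: "theta3 z t = (\<Sum>\<^sub>\<infinity>n. theta3_term t z n)"
  by (simp add: theta3_def theta3_term_def)

lemma norm_theta3_term:
  "norm (theta3_term t z n) = exp (- pi * Im t * (of_int n)^2 - 2 * pi * of_int n * Im z)"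
  by (simp add: theta3_term_def norm_mult exp_add[symmetric] algebra_simps)

lemma range_int_Un_range_neg_Suc: "range int \<union> range (\<lambda>n. - int (Suc n)) = UNIV"
proof -
  have "k \<in> range int \<union> range (\<lambda>n. - int (Suc n))" for k :: int
  proof (cases "k \<ge> 0")
    case True then show ?thesis by (auto intro!: image_eqI[of _ _ "nat k"])
  next
    case False then show ?thesis by (auto intro!: image_eqI[of _ _ "nat (-k-1)"])
  qed
  then show ?thesis by auto
qed

lemma summable_on_power_nat_abs:
  fixes r :: real
  assumes "0 \<le> r" "r < 1"
  shows "(\<lambda>n::int. r ^ nat \<bar>n\<bar>) summable_on UNIV"
proof -
  have geom: "summable (\<lambda>n. norm (r ^ n))"
    using assms by (simp add: norm_power summable_geometric)
  have "(\<lambda>n. r ^ n) summable_on UNIV"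
    by (rule norm_summable_imp_summable_on[OF geom])
  then have nonneg: "(\<lambda>n::int. r ^ nat \<bar>n\<bar>) summable_on range int"
    by (subst summable_on_reindex) (auto simp: o_def)
  have "summable (\<lambda>n. norm (r ^ Suc n))"
    using summable_ignore_initial_segment[OF geom, of 1] by simp
  then have "(\<lambda>n. r ^ Suc n) summable_on UNIV"
    by (rule norm_summable_imp_summable_on)
  then have neg: "(\<lambda>n::int. r ^ nat \<bar>n\<bar>) summable_on range (\<lambda>n. - int (Suc n))"
    by (subst summable_on_reindex) (auto simp: inj_on_def o_def simp del: of_nat_Suc)
  have "range int \<inter> range (\<lambda>n. - int (Suc n)) = {}" by auto
  from summable_on_Un_disjoint[OF nonneg neg this] show ?thesis
    by (simp only: range_int_Un_range_neg_Suc)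
qed

lemma linear_minus_quadratic_le:
  fixes b c m :: real
  assumes "b > 0"
  shows "c * m - b * m^2 \<le> c^2 / (4 * b)"
proof -
  have "0 \<le> (c - 2 * b * m)^2" by simp
  then have "0 \<le> c^2 - 4 * b * (c * m - b * m^2)" by (simp add: power2_eq_square algebra_simps)
  then show ?thesis using assms by (simp add: field_simps)
qed

lemma norm_theta3_term_le:
  assumes t: "Im t > 0" and z: "\<bar>Im z\<bar> \<le> R"
  shows "norm (theta3_term t z n) \<le> exp ((2*pi*R + 1)^2 / (4 * (pi * Im t))) * exp (-1) ^ nat \<bar>n\<bar>"
proof -
  define m where "m = \<bar>real_of_int n\<bar>"
  have "\<bar>of_int n * Im z\<bar> \<le> m * R"
    unfolding m_def abs_mult by (rule mult_left_mono[OF z]) simp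
  then have "2 * pi * (- (of_int n * Im z)) \<le> 2 * pi * (m * R)"
    by (intro mult_left_mono) auto
  moreover have "(of_int n)^2 = m^2" by (simp add: m_def)
  ultimately have "- pi * Im t * (of_int n)^2 - 2 * pi * of_int n * Im z
      \<le> (2*pi*R + 1) * m - (pi * Im t) * m^2 - m"
    by (simp add: algebra_simps)
  also have "\<dots> \<le> (2*pi*R + 1)^2 / (4 * (pi * Im t)) - m"
    using linear_minus_quadratic_le[of "pi * Im t" "2*pi*R + 1" m] t by simp
  also have "\<dots> = ln (exp ((2*pi*R + 1)^2 / (4 * (pi * Im t))) * exp (-1) ^ nat \<bar>n\<bar>)"
    by (simp add: ln_mult ln_realpow m_def)
  finally show ?thesis
    by (simp add: norm_theta3_term ln_ge_iff)
qed

lemma summable_on_theta3_term: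
  assumes "Im t > 0"
  shows "theta3_term t z summable_on UNIV"
proof (rule abs_summable_summable)
  define C where "C = exp ((2*pi*\<bar>Im z\<bar> + 1)^2 / (4 * (pi * Im t)))"
  have "(\<lambda>n. C * exp (-1) ^ nat \<bar>n\<bar>) summable_on UNIV"
    by (intro summable_on_cmult_right summable_on_power_nat_abs) auto
  then show "(\<lambda>n. norm (theta3_term t z n)) summable_on UNIV"
    by (rule Infinite_Sum.abs_summable_on_comparison_test')
       (use norm_theta3_term_le[OF assms order.refl] in \<open>auto simp: C_def\<close>)
qed

lemma has_sum_theta3: "Im t > 0 \<Longrightarrow> (theta3_term t z has_sum theta3 z t) UNIV"
  unfolding theta3_eq_infsum by (rule has_sum_infsum[OF summable_on_theta3_term])

lemma uniform_limit_theta3: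
  assumes "Im t > 0"
  shows "uniform_limit {z. \<bar>Im z\<bar> \<le> R} (\<lambda>X z. \<Sum>n\<in>X. theta3_term t z n) (\<lambda>z. theta3 z t)
           (finite_subsets_at_top UNIV)"
  unfolding theta3_eq_infsum
  by (rule Weierstrass_m_test_general[OF _ summable_on_cmult_right[OF summable_on_power_nat_abs]])
     (use norm_theta3_term_le[OF assms] in auto)

lemma cball_subset_strip: "cball w r \<subseteq> {z. \<bar>Im z\<bar> \<le> \<bar>Im w\<bar> + r}"
proof
  fix z assume "z \<in> cball w r"
  then have "\<bar>Im (z - w)\<bar> \<le> r"
    using abs_Im_le_cmod[of "z - w"] by (simp add: dist_norm norm_minus_commute)
  then show "z \<in> {z. \<bar>Im z\<bar> \<le> \<bar>Im w\<bar> + r}" by auto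
qed

lemma holomorphic_on_UNIV_uniform_limit_strips:
  fixes f :: "'a \<Rightarrow> complex \<Rightarrow> complex"
  assumes lim: "\<And>R. uniform_limit {z. \<bar>Im z\<bar> \<le> R} (\<lambda>X z. \<Sum>n\<in>X. f n z) g (finite_subsets_at_top UNIV)"
    and holo: "\<And>n. f n holomorphic_on UNIV"
  shows "g holomorphic_on UNIV"
proof -
  have "g holomorphic_on ball w 1" for w
  proof -
    have "\<forall>\<^sub>F X in finite_subsets_at_top UNIV.
            continuous_on (cball w 1) (\<lambda>z. \<Sum>n\<in>X. f n z) \<and> (\<lambda>z. \<Sum>n\<in>X. f n z) holomorphic_on ball w 1"
    proof (rule eventually_finite_subsets_at_top_weakI)
      fix X :: "'a set"
      have "(\<lambda>z. \<Sum>n\<in>X. f n z) holomorphic_on UNIV"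
        by (intro holomorphic_on_sum holo)
      then show "continuous_on (cball w 1) (\<lambda>z. \<Sum>n\<in>X. f n z) \<and> (\<lambda>z. \<Sum>n\<in>X. f n z) holomorphic_on ball w 1"
        by (meson holomorphic_on_imp_continuous_on holomorphic_on_subset subset_UNIV)
    qed
    then show ?thesis
      using holomorphic_uniform_limit[OF _ uniform_limit_on_subset[OF lim cball_subset_strip]]
      by auto
  qed
  then show ?thesis
    by (meson centre_in_ball holomorphic_on_imp_differentiable_at holomorphic_on_open open_UNIV
        open_ball zero_less_one)
qed

lemma theta3_holomorphic: "Im t > 0 \<Longrightarrow> (\<lambda>z. theta3 z t) holomorphic_on UNIV"
  by (rule holomorphic_on_UNIV_uniform_limit_strips[OF uniform_limit_theta3])
     (auto simp: theta3_term_def intro!: holomorphic_intros)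

lemma exp_two_pi_i_int: "exp (2 * pi * \<i> * of_int k) = 1"
  by (simp add: exp_eq_1)

lemma theta3_plus_1: "theta3 (z + 1) t = theta3 z t"
proof -
  have "theta3_term t (z + 1) n = theta3_term t z n" for n
  proof -
    have "pi * \<i> * (z + 1) * (2 * of_int n) = pi * \<i> * z * (2 * of_int n) + 2 * pi * \<i> * of_int n"
      by (simp add: algebra_simps)
    then show ?thesis
      unfolding theta3_term_def by (simp only: exp_add exp_two_pi_i_int mult_1_right)
  qed
  then show ?thesis by (simp add: theta3_eq_infsum)
qed

lemma theta3_term_plus_period:
  "theta3_term t (z + t) n = exp (- pi * \<i> * t - 2 * pi * \<i> * z) * theta3_term t z (n + 1)"
  unfolding theta3_term_def mult_exp_exp by (simp add: power2_eq_square algebra_simps)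

lemma theta3_plus_period:
  assumes "Im t > 0"
  shows "theta3 (z + t) t = exp (- pi * \<i> * t - 2 * pi * \<i> * z) * theta3 z t"
proof -
  have "bij_betw (\<lambda>n::int. n + 1) UNIV UNIV"
    by (rule bij_betwI[of _ _ _ "\<lambda>n. n - 1"]) auto
  from has_sum_reindex_bij_betw[OF this, of "theta3_term t z"]
  have "((\<lambda>n. theta3_term t z (n + 1)) has_sum theta3 z t) UNIV"
    using has_sum_theta3[OF assms] by simp
  then have "((\<lambda>n. theta3_term t (z + t) n) has_sum exp (- pi * \<i> * t - 2 * pi * \<i> * z) * theta3 z t) UNIV"
    unfolding theta3_term_plus_period by (rule has_sum_cmult_right)
  then show ?thesis
    using has_sum_theta3[OF assms] has_sum_unique by blast
qed

lemma theta3_minus_period: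
  assumes "Im t > 0"
  shows "theta3 (z - t) t = exp (- pi * \<i> * t + 2 * pi * \<i> * z) * theta3 z t"
proof -
  have "theta3 z t = exp (- pi * \<i> * t - 2 * pi * \<i> * (z - t)) * theta3 (z - t) t"
    using theta3_plus_period[OF assms, of "z - t"] by simp
  then have "exp (- pi * \<i> * t + 2 * pi * \<i> * z) * theta3 z t
      = (exp (- pi * \<i> * t + 2 * pi * \<i> * z) * exp (- pi * \<i> * t - 2 * pi * \<i> * (z - t))) * theta3 (z - t) t"
    by (simp only: mult.assoc)
  also have "exp (- pi * \<i> * t + 2 * pi * \<i> * z) * exp (- pi * \<i> * t - 2 * pi * \<i> * (z - t)) = 1"
    unfolding mult_exp_exp by (simp add: algebra_simps)
  finally show ?thesis by simp
qed

lemma theta3_term_integral: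
  "((\<lambda>z. theta3_term t z n) has_contour_integral (if n = 0 then 1 else 0)) (linepath 0 1)"
proof (cases "n = 0")
  case True
  then show ?thesis
    using has_contour_integral_const_linepath[where c=1 and a=0 and b=1] by (simp add: theta3_term_def)
next
  case False
  define c where "c = 2 * pi * \<i> * of_int n"
  have c: "c \<noteq> 0" "exp c = 1"
    using False exp_two_pi_i_int[of n] by (simp_all add: c_def)
  have "((\<lambda>z. exp (c * z)) has_contour_integral
      (\<lambda>z. exp (c * z) / c) (pathfinish (linepath 0 1)) - (\<lambda>z. exp (c * z) / c) (pathstart (linepath 0 1)))
      (linepath 0 1)"
    by (rule contour_integral_primitive[where S=UNIV, OF _ valid_path_linepath])
       (use c in \<open>auto intro!: derivative_eq_intros\<close>)
  then have "((\<lambda>z. exp (c * z)) has_contour_integral 0) (linepath 0 1)"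
    using c by simp
  from has_contour_integral_lmul[OF this, of "exp (pi * \<i> * t * (of_int n)^2)"] show ?thesis
    using False by (simp add: theta3_term_def c_def algebra_simps)
qed

lemma contour_integral_theta3:
  assumes "Im t > 0"
  shows "contour_integral (linepath 0 1) (\<lambda>z. theta3 z t) = 1"
proof -
  let ?S = "\<lambda>X z. \<Sum>n\<in>X. theta3_term t z n"
  have partial: "(?S X has_contour_integral (\<Sum>n\<in>X. if n = 0 then 1 else 0)) (linepath 0 1)"
    if "finite X" for X
    by (rule has_contour_integral_sum[OF that theta3_term_integral])
  have "uniform_limit (path_image (linepath 0 1)) ?S (\<lambda>z. theta3 z t) (finite_subsets_at_top UNIV)"
    by (rule uniform_limit_on_subset[OF uniform_limit_theta3[OF assms, of 0]])
       (auto simp: closed_segment_def)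
  moreover have "\<forall>\<^sub>F X in finite_subsets_at_top UNIV. ?S X contour_integrable_on linepath 0 1"
    by (rule eventually_finite_subsets_at_top_weakI) (use partial in \<open>blast intro: has_contour_integral_integrable\<close>)
  ultimately have lim: "((\<lambda>X. contour_integral (linepath 0 1) (?S X))
      \<longlongrightarrow> contour_integral (linepath 0 1) (\<lambda>z. theta3 z t)) (finite_subsets_at_top UNIV)"
    by (intro contour_integral_uniform_limit(2)[where B=1]) (auto simp: finite_subsets_at_top_neq_bot)
  have "\<forall>\<^sub>F X in finite_subsets_at_top UNIV. finite X \<and> {0} \<subseteq> X"
    unfolding eventually_finite_subsets_at_top by (intro exI[of _ "{0}"]) auto
  then have "\<forall>\<^sub>F X in finite_subsets_at_top UNIV. contour_integral (linepath 0 1) (?S X) = 1"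
  proof eventually_elim
    case (elim X)
    then have "contour_integral (linepath 0 1) (?S X) = (\<Sum>n\<in>X. if n = 0 then 1 else 0)"
      using partial contour_integral_unique by blast
    with elim show ?case by simp
  qed
  then have "((\<lambda>X. contour_integral (linepath 0 1) (?S X)) \<longlongrightarrow> 1) (finite_subsets_at_top UNIV)"
    by (rule tendsto_eventually)
  with lim show ?thesis
    using tendsto_unique finite_subsets_at_top_neq_bot by metis
qed

section \<open>Fourier coefficients of periodic entire functions\<close>

definition fourier_coeff :: "(complex \<Rightarrow> complex) \<Rightarrow> int \<Rightarrow> complex" where
  "fourier_coeff F n = contour_integral (linepath 0 1) (\<lambda>z. F z * exp (- 2 * pi * \<i> * of_int n * z))"

lemma contour_integral_linepath_translate:
  "contour_integral (linepath (a + c) (b + c)) h = contour_integral (linepath a b) (\<lambda>z. h (z + c))"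
  by (metis contour_integral_translate linepath_translate)

lemma contour_integrable_holomorphic_UNIV:
  "h holomorphic_on UNIV \<Longrightarrow> h contour_integrable_on linepath a b"
  by (rule contour_integrable_holomorphic_simple[OF _ open_UNIV valid_path_linepath]) auto

lemma contour_integral_period_segment:
  assumes holo: "h holomorphic_on UNIV" and per: "\<And>z. h (z + 1) = h z"
  shows "contour_integral (linepath w (w + 1)) h = contour_integral (linepath 0 1) h"
proof -
  define g where "g = linepath 0 1 +++ linepath 1 (w + 1) +++ linepath (w + 1) w +++ linepath w 0"
  have "valid_path g" unfolding g_def by (intro valid_path_join) auto
  then have "(h has_contour_integral 0) g"
    by (rule Cauchy_theorem_convex_simple[OF holo convex_UNIV]) (auto simp: g_def)
  moreover have "(h has_contour_integral
      (contour_integral (linepath 0 1) h + (contour_integral (linepath 1 (w + 1)) h +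
       (contour_integral (linepath (w + 1) w) h + contour_integral (linepath w 0) h)))) g"
    unfolding g_def
    by (intro has_contour_integral_join has_contour_integral_integral
          contour_integrable_holomorphic_UNIV[OF holo] valid_path_join) auto
  ultimately have sum0: "contour_integral (linepath 0 1) h + (contour_integral (linepath 1 (w + 1)) h +
       (contour_integral (linepath (w + 1) w) h + contour_integral (linepath w 0) h)) = 0"
    using has_contour_integral_unique by blast
  have cont: "continuous_on (closed_segment a b) h" for a b
    using holo holomorphic_on_imp_continuous_on continuous_on_subset by blast
  have "contour_integral (linepath 1 (w + 1)) h = contour_integral (linepath 0 w) h"
    using contour_integral_linepath_translate[of 0 1 w h] by (simp add: per)
  moreover have "contour_integral (linepath (w + 1) w) h = - contour_integral (linepath w (w + 1)) h"
    "contour_integral (linepath w 0) h = - contour_integral (linepath 0 w) h"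
    by (rule contour_integral_reverse_linepath[OF cont])+
  ultimately show ?thesis
    using sum0 by (simp add: algebra_simps)
qed

lemma fourier_coeff_segment:
  assumes holo: "F holomorphic_on UNIV" and per: "\<And>z. F (z + 1) = F z"
  shows "((\<lambda>z. F z * exp (- 2 * pi * \<i> * of_int k * z)) has_contour_integral fourier_coeff F k)
           (linepath w (w + 1))"
proof -
  let ?h = "\<lambda>z. F z * exp (- 2 * pi * \<i> * of_int k * z)"
  have holo_h: "?h holomorphic_on UNIV"
    by (intro holomorphic_intros holo)
  have "?h (z + 1) = ?h z" for z
  proof -
    have "- 2 * pi * \<i> * of_int k * (z + 1) = - 2 * pi * \<i> * of_int k * z + 2 * pi * \<i> * of_int (- k)"
      by (simp add: algebra_simps)
    then show ?thesis
      by (simp only: per exp_add exp_two_pi_i_int mult_1_right)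
  qed
  then have "contour_integral (linepath w (w + 1)) ?h = fourier_coeff F k"
    unfolding fourier_coeff_def by (rule contour_integral_period_segment[OF holo_h])
  with has_contour_integral_integral[OF contour_integrable_holomorphic_UNIV[OF holo_h, of w "w + 1"]]
  show ?thesis by simp
qed

text \<open>
  Quasi-periodicity is needed on one horizontal line only, since the coefficient integral may be
  taken over any segment [w, w + 1].
\<close>

lemma fourier_coeff_succ:
  assumes holo: "F holomorphic_on UNIV" and per: "\<And>z. F (z + 1) = F z"
    and quasi: "\<And>z. Im z = y0 \<Longrightarrow> F (z + t) = exp (- pi * \<i> * t - 2 * pi * \<i> * z) * F z"
  shows "fourier_coeff F (n + 1) = exp (pi * \<i> * t * (2 * of_int n + 1)) * fourier_coeff F n"
proof -
  define c where "c = exp (- pi * \<i> * t * (2 * of_int n + 1))"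
  let ?h = "\<lambda>k z. F z * exp (- 2 * pi * \<i> * of_int k * z)"
  have shift: "?h n (z + t) = c * ?h (n + 1) z" if "Im z = y0" for z
  proof -
    have "?h n (z + t) = F z * (exp (- pi * \<i> * t - 2 * pi * \<i> * z) * exp (- 2 * pi * \<i> * of_int n * (z + t)))"
      using quasi[OF that] by (simp add: algebra_simps)
    also have "exp (- pi * \<i> * t - 2 * pi * \<i> * z) * exp (- 2 * pi * \<i> * of_int n * (z + t))
        = c * exp (- 2 * pi * \<i> * of_int (n + 1) * z)"
      unfolding c_def mult_exp_exp by (simp add: algebra_simps)
    finally show ?thesis by (simp add: algebra_simps)
  qed
  have "fourier_coeff F n = contour_integral (linepath (\<i> * y0 + t) (\<i> * y0 + 1 + t)) (?h n)"
    using contour_integral_unique[OF fourier_coeff_segment[OF holo per, where k=n and w="\<i> * y0 + t"]]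
    by (simp add: add_ac)
  also have "\<dots> = contour_integral (linepath (\<i> * y0) (\<i> * y0 + 1)) (\<lambda>z. ?h n (z + t))"
    by (rule contour_integral_linepath_translate)
  also have "\<dots> = contour_integral (linepath (\<i> * y0) (\<i> * y0 + 1)) (\<lambda>z. c * ?h (n + 1) z)"
  proof (rule contour_integral_cong)
    fix z assume "z \<in> path_image (linepath (\<i> * y0) (\<i> * y0 + 1))"
    then have "Im z = y0" by (auto simp: closed_segment_def algebra_simps)
    then show "?h n (z + t) = c * ?h (n + 1) z" by (rule shift)
  qed simp
  also have "\<dots> = c * contour_integral (linepath (\<i> * y0) (\<i> * y0 + 1)) (?h (n + 1))"
    by (rule contour_integral_lmul) (intro contour_integrable_holomorphic_UNIV holomorphic_intros holo)
  also have "\<dots> = c * fourier_coeff F (n + 1)"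
    using contour_integral_unique[OF fourier_coeff_segment[OF holo per, where k="n + 1" and w="\<i> * y0"]]
    by simp
  finally have "fourier_coeff F n = c * fourier_coeff F (n + 1)" .
  moreover have "exp (pi * \<i> * t * (2 * of_int n + 1)) * c = 1"
    unfolding c_def mult_exp_exp by simp
  ultimately show ?thesis
    by (simp add: mult.assoc[symmetric])
qed

lemma fourier_coeff_quasiperiodic:
  assumes holo: "F holomorphic_on UNIV" and per: "\<And>z. F (z + 1) = F z"
    and quasi: "\<And>z. Im z = y0 \<Longrightarrow> F (z + t) = exp (- pi * \<i> * t - 2 * pi * \<i> * z) * F z"
  shows "fourier_coeff F n = exp (pi * \<i> * t * (of_int n)^2) * fourier_coeff F 0"
proof (induct n rule: int_induct[where k=0])
  case base
  then show ?case by simp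
next
  case (step1 i)
  have "fourier_coeff F (i + 1)
      = exp (pi * \<i> * t * (2 * of_int i + 1)) * (exp (pi * \<i> * t * (of_int i)^2) * fourier_coeff F 0)"
    using fourier_coeff_succ[OF holo per quasi, where n=i] step1(2) by simp
  also have "\<dots> = exp (pi * \<i> * t * (of_int (i + 1))^2) * fourier_coeff F 0"
    unfolding mult.assoc[symmetric] mult_exp_exp by (simp add: power2_eq_square algebra_simps)
  finally show ?case .
next
  case (step2 i)
  define e where "e = exp (pi * \<i> * t * (2 * of_int (i - 1) + 1))"
  have "exp (pi * \<i> * t * (of_int i)^2) = e * exp (pi * \<i> * t * (of_int (i - 1))^2)"
    unfolding e_def mult_exp_exp by (simp add: power2_eq_square algebra_simps)
  then have "e * fourier_coeff F (i - 1) = e * (exp (pi * \<i> * t * (of_int (i - 1))^2) * fourier_coeff F 0)"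
    using fourier_coeff_succ[OF holo per quasi, where n="i - 1"] step2(2) by (simp add: e_def mult.assoc)
  then show ?case
    by (simp add: e_def)
qed

lemma fourier_coeff_diff:
  assumes "F holomorphic_on UNIV" "G holomorphic_on UNIV"
  shows "fourier_coeff (\<lambda>z. F z - c * G z) k = fourier_coeff F k - c * fourier_coeff G k"
proof -
  let ?e = "\<lambda>z. exp (- 2 * pi * \<i> * of_int k * z)"
  have "(\<lambda>z. F z * ?e z) contour_integrable_on linepath 0 1"
    "(\<lambda>z. G z * ?e z) contour_integrable_on linepath 0 1"
    "(\<lambda>z. c * (G z * ?e z)) contour_integrable_on linepath 0 1"
    by (intro contour_integrable_holomorphic_UNIV holomorphic_intros assms)+
  then show ?thesis
    unfolding fourier_coeff_def
    by (simp add: left_diff_distrib mult.assoc contour_integral_diff contour_integral_lmul[symmetric])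
qed

lemma fourier_coeff_theta3:
  assumes "Im t > 0"
  shows "fourier_coeff (\<lambda>z. theta3 z t) k = exp (pi * \<i> * t * (of_int k)^2)"
proof -
  have "fourier_coeff (\<lambda>z. theta3 z t) 0 = 1"
    using contour_integral_theta3[OF assms] by (simp add: fourier_coeff_def)
  with fourier_coeff_quasiperiodic[OF theta3_holomorphic[OF assms] theta3_plus_1
      theta3_plus_period[OF assms], where n=k]
  show ?thesis by simp
qed

lemma zero_if_norm_le_geometric:
  fixes x :: "'a::real_normed_vector"
  assumes bound: "\<And>N. norm x \<le> M * \<rho> ^ N" and "0 \<le> \<rho>" "\<rho> < 1"
  shows "x = 0"
proof -
  have "(\<lambda>N. M * \<rho> ^ N) \<longlonglongrightarrow> M * 0"
    by (intro tendsto_mult tendsto_const LIMSEQ_power_zero) (use assms in simp)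
  then have "norm x \<le> M * 0"
    by (rule LIMSEQ_le_const) (use bound in auto)
  then show ?thesis by simp
qed

lemma divide_one_minus_eq_geometric:
  fixes r x :: "'a::field"
  assumes "r \<noteq> 1"
  shows "x / (1 - r) = (\<Sum>k<N. x * r ^ k) + r ^ N * (x / (1 - r))"
proof -
  have "(\<Sum>k<N. x * r ^ k) = x * ((1 - r ^ N) / (1 - r))"
    using assms by (simp add: sum_distrib_left[symmetric] sum_gp_strict)
  then show ?thesis
    using assms by (simp add: field_simps)
qed

lemma contour_integral_eq_geometric_remainder:
  fixes H r :: "complex \<Rightarrow> complex"
  assumes cont: "continuous_on (closed_segment a b) (\<lambda>z. H z / (1 - r z))" "continuous_on (closed_segment a b) r"
    and r_ne_1: "\<And>z. z \<in> closed_segment a b \<Longrightarrow> r z \<noteq> 1"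
    and terms: "\<And>k. ((\<lambda>z. H z * r z ^ k) has_contour_integral 0) (linepath a b)"
  shows "contour_integral (linepath a b) (\<lambda>z. H z / (1 - r z))
           = contour_integral (linepath a b) (\<lambda>z. r z ^ N * (H z / (1 - r z)))"
proof -
  let ?J = "contour_integral (linepath a b) (\<lambda>z. r z ^ N * (H z / (1 - r z)))"
  have J: "((\<lambda>z. r z ^ N * (H z / (1 - r z))) has_contour_integral ?J) (linepath a b)"
    by (intro has_contour_integral_integral contour_integrable_continuous_linepath continuous_intros cont)
  have "((\<lambda>z. \<Sum>k<N. H z * r z ^ k) has_contour_integral 0) (linepath a b)"
    using has_contour_integral_sum[of "{..<N}", OF _ terms] by simp
  from has_contour_integral_add[OF this J]
  have "((\<lambda>z. H z / (1 - r z)) has_contour_integral 0 + ?J) (linepath a b)"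
  proof (rule has_contour_integral_eq)
    fix z assume "z \<in> path_image (linepath a b)"
    then have "r z \<noteq> 1"
      using r_ne_1 by simp
    from divide_one_minus_eq_geometric[OF this, of "H z" N]
    show "(\<Sum>k<N. H z * r z ^ k) + r z ^ N * (H z / (1 - r z)) = H z / (1 - r z)"
      by (rule sym)
  qed
  then show ?thesis
    by (simp add: contour_integral_unique)
qed

lemma has_contour_integral_geometric_series:
  fixes H r :: "complex \<Rightarrow> complex"
  assumes cont: "continuous_on (closed_segment a b) H" "continuous_on (closed_segment a b) r"
    and small: "\<And>z. z \<in> closed_segment a b \<Longrightarrow> norm (r z) \<le> \<rho>" and "\<rho> < 1"
    and terms: "\<And>k. ((\<lambda>z. H z * r z ^ k) has_contour_integral 0) (linepath a b)"
  shows "((\<lambda>z. H z / (1 - r z)) has_contour_integral 0) (linepath a b)"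
proof -
  let ?\<Phi> = "\<lambda>z. H z / (1 - r z)"
  have r_ne_1: "r z \<noteq> 1" if "z \<in> closed_segment a b" for z
    using small[OF that] \<open>\<rho> < 1\<close> by auto
  have cont_\<Phi>: "continuous_on (closed_segment a b) ?\<Phi>"
    using r_ne_1 by (intro continuous_on_divide continuous_on_diff continuous_on_const cont) auto
  obtain M where M: "\<And>z. z \<in> closed_segment a b \<Longrightarrow> norm (?\<Phi> z) \<le> M"
    using compact_continuous_image[OF cont_\<Phi> compact_segment]
    by (meson compact_imp_bounded bounded_iff imageI)
  have a: "a \<in> closed_segment a b" by simp
  have "0 \<le> M" "0 \<le> \<rho>"
    using M[OF a] small[OF a] norm_ge_zero by (blast intro: order_trans)+
  have "norm (contour_integral (linepath a b) ?\<Phi>) \<le> (M * norm (b - a)) * \<rho> ^ N" for N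
  proof -
    have "norm (contour_integral (linepath a b) (\<lambda>z. r z ^ N * ?\<Phi> z)) \<le> (\<rho> ^ N * M) * norm (b - a)"
    proof (rule has_contour_integral_bound_linepath)
      show "((\<lambda>z. r z ^ N * ?\<Phi> z) has_contour_integral contour_integral (linepath a b) (\<lambda>z. r z ^ N * ?\<Phi> z))
          (linepath a b)"
        by (intro has_contour_integral_integral contour_integrable_continuous_linepath continuous_intros
            cont_\<Phi> cont)
      fix z assume z: "z \<in> closed_segment a b"
      show "norm (r z ^ N * ?\<Phi> z) \<le> \<rho> ^ N * M"
        unfolding norm_mult norm_power
        by (intro mult_mono power_mono small[OF z] M[OF z]) (use \<open>0 \<le> \<rho>\<close> in auto)
    qed (use \<open>0 \<le> M\<close> \<open>0 \<le> \<rho>\<close> in simp)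
    moreover have "contour_integral (linepath a b) ?\<Phi> = contour_integral (linepath a b) (\<lambda>z. r z ^ N * ?\<Phi> z)"
      by (rule contour_integral_eq_geometric_remainder[OF cont_\<Phi> cont(2) r_ne_1 terms])
    ultimately show ?thesis
      by (simp only: mult_ac)
  qed
  then have "contour_integral (linepath a b) ?\<Phi> = 0"
    by (rule zero_if_norm_le_geometric) (use \<open>0 \<le> \<rho>\<close> \<open>\<rho> < 1\<close> in auto)
  then show ?thesis
    using has_contour_integral_integral[OF contour_integrable_continuous_linepath[OF cont_\<Phi>]] by simp
qed

text \<open>
  The k-th term H (c e^(2\<pi>imz))^k of the geometric expansion integrates over [w, w + 1] to
  c^k times the Fourier coefficient of H of index -mk.
\<close>

lemma has_contour_integral_fourier_geometric:
  assumes holo: "H holomorphic_on UNIV" and per: "\<And>z. H (z + 1) = H z"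
    and coeff: "\<And>k. fourier_coeff H k = 0"
    and small: "norm (c * exp (2 * pi * \<i> * of_int m * w)) < 1"
  shows "((\<lambda>z. H z / (1 - c * exp (2 * pi * \<i> * of_int m * z))) has_contour_integral 0)
           (linepath w (w + 1))"
proof -
  define r where "r = (\<lambda>z. c * exp (2 * pi * \<i> * of_int m * z))"
  have norm_r: "norm (r z) = norm (r w)" if "z \<in> closed_segment w (w + 1)" for z
  proof -
    from that have "Im z = Im w" by (auto simp: closed_segment_def algebra_simps)
    then show ?thesis by (simp add: r_def norm_mult norm_exp_eq_Re)
  qed
  have "((\<lambda>z. H z / (1 - r z)) has_contour_integral 0) (linepath w (w + 1))"
  proof (rule has_contour_integral_geometric_series[where \<rho> = "norm (r w)"])
    show "continuous_on (closed_segment w (w + 1)) H"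
      using holo holomorphic_on_imp_continuous_on continuous_on_subset by blast
    show "continuous_on (closed_segment w (w + 1)) r"
      unfolding r_def by (intro continuous_intros)
    show "norm (r z) \<le> norm (r w)" if "z \<in> closed_segment w (w + 1)" for z
      using norm_r[OF that] by simp
    show "norm (r w) < 1"
      using small by (simp add: r_def)
    fix k
    have "H z * r z ^ k = c ^ k * (H z * exp (- 2 * pi * \<i> * of_int (- (m * int k)) * z))" for z
    proof -
      have "exp (2 * pi * \<i> * of_int m * z) ^ k = exp (of_nat k * (2 * pi * \<i> * of_int m * z))"
        by (rule exp_of_nat_mult[symmetric])
      then show ?thesis
        by (simp add: r_def power_mult_distrib algebra_simps)
    qed
    then show "((\<lambda>z. H z * r z ^ k) has_contour_integral 0) (linepath w (w + 1))"
      using has_contour_integral_lmul[OF fourier_coeff_segment[OF holo per, where k="- (m * int k)" and w=w],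
          of "c ^ k"]
      by (simp only: coeff mult_zero_right)
  qed
  then show ?thesis by (simp add: r_def)
qed

lemma contour_integral_rectpath_periodic:
  fixes h :: real
  assumes cont: "continuous_on (path_image (rectpath a (a + 1 + \<i> * h))) \<Phi>"
    and per: "\<And>z. \<Phi> (z + 1) = \<Phi> z"
  shows "contour_integral (rectpath a (a + 1 + \<i> * h)) \<Phi> =
         contour_integral (linepath a (a + 1)) \<Phi> - contour_integral (linepath (a + \<i> * h) (a + \<i> * h + 1)) \<Phi>"
proof -
  define b where "b = a + \<i> * h"
  have rect: "rectpath a (a + 1 + \<i> * h) =
      linepath a (a + 1) +++ linepath (a + 1) (b + 1) +++ linepath (b + 1) b +++ linepath b a"
  proof -
    have "Complex (Re (a + 1 + \<i> * h)) (Im a) = a + 1" "Complex (Re a) (Im (a + 1 + \<i> * h)) = b"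
      by (simp_all add: complex_eq_iff b_def)
    then show ?thesis
      unfolding rectpath_def Let_def by (simp add: b_def add_ac)
  qed
  have "path_image (rectpath a (a + 1 + \<i> * h)) =
      closed_segment a (a + 1) \<union> closed_segment (a + 1) (b + 1) \<union> closed_segment (b + 1) b \<union> closed_segment b a"
    unfolding rect by (simp add: path_image_join Un_assoc)
  then have "continuous_on (closed_segment a (a + 1)) \<Phi>" "continuous_on (closed_segment (a + 1) (b + 1)) \<Phi>"
    "continuous_on (closed_segment (b + 1) b) \<Phi>" "continuous_on (closed_segment b a) \<Phi>"
    using cont by (auto elim: continuous_on_subset)
  then have "contour_integral (rectpath a (a + 1 + \<i> * h)) \<Phi> =
      contour_integral (linepath a (a + 1)) \<Phi> + (contour_integral (linepath (a + 1) (b + 1)) \<Phi> +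
      (contour_integral (linepath (b + 1) b) \<Phi> + contour_integral (linepath b a) \<Phi>))"
    unfolding rect
    by (simp add: contour_integral_join contour_integrable_continuous_linepath valid_path_join)
  moreover have "contour_integral (linepath (a + 1) (b + 1)) \<Phi> = contour_integral (linepath a b) \<Phi>"
    using contour_integral_linepath_translate[of a 1 b \<Phi>] by (simp add: per)
  moreover have "contour_integral (linepath (b + 1) b) \<Phi> = - contour_integral (linepath b (b + 1)) \<Phi>"
    "contour_integral (linepath b a) \<Phi> = - contour_integral (linepath a b) \<Phi>"
    by (rule contour_integral_reverse_linepath; fact)+
  ultimately show ?thesis
    by (simp add: b_def)
qed

text \<open>
  In the variable u = exp(2\<pi>iz) this is H u/(u - u0) with u0 = exp(2\<pi>iz0): its integral
  around a period rectangle picks up H(z0), while on the horizontal sides it expands in powers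
  of u0/u or u/u0.
\<close>

definition periodic_cauchy_integrand :: "(complex \<Rightarrow> complex) \<Rightarrow> complex \<Rightarrow> complex \<Rightarrow> complex" where
  "periodic_cauchy_integrand H z0 z =
     H z * exp (2 * pi * \<i> * z) / (exp (2 * pi * \<i> * z) - exp (2 * pi * \<i> * z0))"

lemma periodic_cauchy_integrand_plus_1:
  assumes "\<And>z. H (z + 1) = H z"
  shows "periodic_cauchy_integrand H z0 (z + 1) = periodic_cauchy_integrand H z0 z"
proof -
  have "exp (2 * pi * \<i> * (z + 1)) = exp (2 * pi * \<i> * z)"
    using exp_two_pi_i_int[of 1] by (simp add: distrib_left exp_add)
  then show ?thesis
    by (simp add: periodic_cauchy_integrand_def assms)
qed

lemma exp_two_pi_i_eq_imp_eq:
  assumes "exp (2 * pi * \<i> * z) = exp (2 * pi * \<i> * w)" and "\<bar>Re z - Re w\<bar> < 1"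
  shows "z = w"
proof -
  obtain n :: int where "2 * pi * \<i> * z = 2 * pi * \<i> * w + complex_of_real (real_of_int (2 * n) * pi) * \<i>"
    using assms(1) unfolding exp_eq by blast
  then have "2 * pi * \<i> * z = 2 * pi * \<i> * (w + of_int n)"
    by (simp add: algebra_simps)
  then have z: "z = w + of_int n"
    by simp
  with assms(2) have "n = 0" by simp
  with z show ?thesis by simp
qed

text \<open>The hypothesis H z0 \<noteq> 0 is only needed by the simple-pole residue formula of the library.\<close>

lemma contour_integral_rectpath_periodic_cauchy_integrand:
  assumes holo: "H holomorphic_on UNIV" and "H z0 \<noteq> 0"
  shows "contour_integral (rectpath (z0 - 1/2 - \<i>) (z0 + 1/2 + \<i>)) (periodic_cauchy_integrand H z0) = H z0"
proof -
  define S where "S = box (z0 - 3/4 - 2 * \<i>) (z0 + 3/4 + 2 * \<i>)"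
  define u0 where "u0 = exp (2 * pi * \<i> * z0)"
  let ?f = "\<lambda>z. H z * exp (2 * pi * \<i> * z)" and ?g = "\<lambda>z. exp (2 * pi * \<i> * z) - u0"
  have \<Phi>: "periodic_cauchy_integrand H z0 = (\<lambda>z. ?f z / ?g z)"
    by (simp add: fun_eq_iff periodic_cauchy_integrand_def u0_def)
  have z0: "z0 \<in> box (z0 - 1/2 - \<i>) (z0 + 1/2 + \<i>)" and "z0 \<in> S"
    by (simp_all add: S_def in_box_complex_iff)
  have "path_image (rectpath (z0 - 1/2 - \<i>) (z0 + 1/2 + \<i>)) \<subseteq> cbox (z0 - 1/2 - \<i>) (z0 + 1/2 + \<i>) - {z0}"
    using path_image_rectpath_cbox_minus_box[of "z0 - 1/2 - \<i>" "z0 + 1/2 + \<i>"] z0 by auto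
  moreover have "cbox (z0 - 1/2 - \<i>) (z0 + 1/2 + \<i>) \<subseteq> S"
    by (auto simp: S_def in_box_complex_iff in_cbox_complex_iff)
  ultimately have path: "path_image (rectpath (z0 - 1/2 - \<i>) (z0 + 1/2 + \<i>)) \<subseteq> S - {z0}"
    by blast
  have "?g z \<noteq> 0" if "z \<in> S - {z0}" for z
    using that exp_two_pi_i_eq_imp_eq[of z z0] by (auto simp: S_def u0_def in_box_complex_iff abs_less_iff)
  then have holo_\<Phi>: "(\<lambda>z. ?f z / ?g z) holomorphic_on S - {z0}"
    by (intro holomorphic_intros holomorphic_on_subset[OF holo]) auto
  have holo_f: "?f holomorphic_on S" and holo_g: "?g holomorphic_on S"
    by (intro holomorphic_intros holomorphic_on_subset[OF holo] subset_UNIV)+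
  have deriv: "(?g has_field_derivative (2 * pi * \<i> * u0)) (at z0)"
    unfolding u0_def by (auto intro!: derivative_eq_intros)
  have res: "residue (\<lambda>z. ?f z / ?g z) z0 = ?f z0 / (2 * pi * \<i> * u0)"
    by (rule residue_simple_pole_deriv[OF holo_f holo_g _ _ \<open>z0 \<in> S\<close> deriv])
       (use \<open>H z0 \<noteq> 0\<close> in \<open>auto simp: S_def u0_def intro: convex_connected\<close>)
  have "contour_integral (rectpath (z0 - 1/2 - \<i>) (z0 + 1/2 + \<i>)) (\<lambda>z. ?f z / ?g z) =
      2 * pi * \<i> * (\<Sum>p\<in>{z0}. winding_number (rectpath (z0 - 1/2 - \<i>) (z0 + 1/2 + \<i>)) p *
        residue (\<lambda>z. ?f z / ?g z) p)"
  proof (rule Residue_theorem[OF _ _ _ holo_\<Phi> _ _ path])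
    show "\<forall>z. z \<notin> S \<longrightarrow> winding_number (rectpath (z0 - 1/2 - \<i>) (z0 + 1/2 + \<i>)) z = 0"
      using winding_number_rectpath_outside[of "z0 - 1/2 - \<i>" "z0 + 1/2 + \<i>"]
        \<open>cbox (z0 - 1/2 - \<i>) (z0 + 1/2 + \<i>) \<subseteq> S\<close> by auto
  qed (auto simp: S_def intro: convex_connected)
  also have "\<dots> = 2 * pi * \<i> * residue (\<lambda>z. ?f z / ?g z) z0"
    using winding_number_rectpath[OF z0] by simp
  also have "\<dots> = H z0"
    unfolding res by (simp add: u0_def)
  finally show ?thesis
    by (simp only: \<Phi>)
qed

lemma contour_integral_periodic_cauchy_integrand_sides:
  assumes holo: "H holomorphic_on UNIV" and per: "\<And>z. H (z + 1) = H z" and "H z0 \<noteq> 0"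
  shows "H z0 = contour_integral (linepath (z0 - 1/2 - \<i>) (z0 - 1/2 - \<i> + 1)) (periodic_cauchy_integrand H z0)
              - contour_integral (linepath (z0 - 1/2 + \<i>) (z0 - 1/2 + \<i> + 1)) (periodic_cauchy_integrand H z0)"
proof -
  define a where "a = z0 - 1/2 - \<i>"
  define u0 where "u0 = exp (2 * pi * \<i> * z0)"
  let ?R = "rectpath a (a + 1 + \<i> * complex_of_real 2)"
  have "a + 1 + \<i> * complex_of_real 2 = z0 + 1/2 + \<i>"
    by (simp add: a_def)
  then have R: "?R = rectpath (z0 - 1/2 - \<i>) (z0 + 1/2 + \<i>)"
    by (simp only: a_def)
  have top: "a + \<i> * complex_of_real 2 = z0 - 1/2 + \<i>"
    by (simp add: a_def)
  have "exp (2 * pi * \<i> * z) \<noteq> u0" if "z \<in> path_image ?R" for z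
  proof
    assume "exp (2 * pi * \<i> * z) = u0"
    moreover have "z \<in> cbox (z0 - 1/2 - \<i>) (z0 + 1/2 + \<i>) - box (z0 - 1/2 - \<i>) (z0 + 1/2 + \<i>)"
      using that[unfolded R] path_image_rectpath_cbox_minus_box[of "z0 - 1/2 - \<i>" "z0 + 1/2 + \<i>"] by simp
    ultimately show False
      using exp_two_pi_i_eq_imp_eq[of z z0]
      by (auto simp: u0_def in_box_complex_iff in_cbox_complex_iff abs_less_iff)
  qed
  moreover have "continuous_on S H" "continuous_on S (\<lambda>z. exp (2 * pi * \<i> * z))" for S
    using holo holomorphic_on_imp_continuous_on continuous_on_subset by (blast, intro continuous_intros)
  ultimately have "continuous_on (path_image ?R) (\<lambda>z. H z * exp (2 * pi * \<i> * z) / (exp (2 * pi * \<i> * z) - u0))"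
    by (intro continuous_on_divide continuous_on_mult continuous_on_diff continuous_on_const) auto
  then have "continuous_on (path_image ?R) (periodic_cauchy_integrand H z0)"
    by (simp add: periodic_cauchy_integrand_def u0_def)
  from contour_integral_rectpath_periodic[OF this periodic_cauchy_integrand_plus_1[of H, OF per],
      unfolded R, unfolded top, unfolded a_def]
  show ?thesis
    unfolding contour_integral_rectpath_periodic_cauchy_integrand[OF holo \<open>H z0 \<noteq> 0\<close>] .
qed

lemma has_contour_integral_periodic_cauchy_integrand_below:
  assumes holo: "H holomorphic_on UNIV" and per: "\<And>z. H (z + 1) = H z"
    and coeff: "\<And>k. fourier_coeff H k = 0" and "Im w < Im z0"
  shows "(periodic_cauchy_integrand H z0 has_contour_integral 0) (linepath w (w + 1))"
proof -
  define u0 where "u0 = exp (2 * pi * \<i> * z0)"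
  have expansion: "periodic_cauchy_integrand H z0 = (\<lambda>z. H z / (1 - u0 * exp (2 * pi * \<i> * of_int (-1) * z)))"
  proof
    fix z
    define e where "e = exp (2 * pi * \<i> * z)"
    have "e \<noteq> 0" by (simp add: e_def)
    have "exp (2 * pi * \<i> * of_int (-1) * z) = inverse e"
      by (simp add: e_def exp_minus[symmetric])
    moreover have "1 - u0 * inverse e = (e - u0) / e"
      using \<open>e \<noteq> 0\<close> by (simp add: field_simps)
    ultimately show "periodic_cauchy_integrand H z0 z = H z / (1 - u0 * exp (2 * pi * \<i> * of_int (-1) * z))"
      unfolding periodic_cauchy_integrand_def e_def[symmetric] u0_def[symmetric] by simp
  qed
  have "norm (u0 * exp (2 * pi * \<i> * of_int (-1) * w)) < 1"
    using \<open>Im w < Im z0\<close> by (simp add: u0_def norm_mult norm_exp_eq_Re flip: exp_add)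
  then show ?thesis
    unfolding expansion by (rule has_contour_integral_fourier_geometric[OF holo per coeff])
qed

lemma has_contour_integral_periodic_cauchy_integrand_above:
  assumes holo: "H holomorphic_on UNIV" and per: "\<And>z. H (z + 1) = H z"
    and coeff: "\<And>k. fourier_coeff H k = 0" and "Im w > Im z0"
  shows "(periodic_cauchy_integrand H z0 has_contour_integral 0) (linepath w (w + 1))"
proof -
  define u0 where "u0 = exp (2 * pi * \<i> * z0)"
  have "norm (inverse u0 * exp (2 * pi * \<i> * of_int 1 * w)) < 1"
    using \<open>Im w > Im z0\<close> by (simp add: u0_def norm_mult norm_exp_eq_Re exp_minus[symmetric] flip: exp_add)
  from has_contour_integral_diff[OF fourier_coeff_segment[OF holo per, where k=0 and w=w]
      has_contour_integral_fourier_geometric[OF holo per coeff this]]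
  have "((\<lambda>z. H z - H z / (1 - inverse u0 * exp (2 * pi * \<i> * z))) has_contour_integral 0) (linepath w (w + 1))"
    using coeff by simp
  then show ?thesis
  proof (rule has_contour_integral_eq)
    fix z assume "z \<in> path_image (linepath w (w + 1))"
    then have "Im z = Im w"
      by (auto simp: closed_segment_def algebra_simps)
    with \<open>Im w > Im z0\<close> have "norm (exp (2 * pi * \<i> * z)) \<noteq> norm u0"
      by (simp add: u0_def norm_exp_eq_Re)
    then have "exp (2 * pi * \<i> * z) - u0 \<noteq> 0" "u0 - exp (2 * pi * \<i> * z) \<noteq> 0"
      by auto
    moreover have "u0 \<noteq> 0"
      by (simp add: u0_def)
    ultimately show "H z - H z / (1 - inverse u0 * exp (2 * pi * \<i> * z)) = periodic_cauchy_integrand H z0 z"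
      unfolding periodic_cauchy_integrand_def u0_def[symmetric] by (simp add: field_simps)
  qed
qed

lemma periodic_entire_eq_0_if_fourier_coeff_eq_0:
  assumes holo: "H holomorphic_on UNIV" and per: "\<And>z. H (z + 1) = H z"
    and coeff: "\<And>k. fourier_coeff H k = 0"
  shows "H z0 = 0"
proof (rule ccontr)
  assume "H z0 \<noteq> 0"
  have "(periodic_cauchy_integrand H z0 has_contour_integral 0) (linepath (z0 - 1/2 - \<i>) (z0 - 1/2 - \<i> + 1))"
    "(periodic_cauchy_integrand H z0 has_contour_integral 0) (linepath (z0 - 1/2 + \<i>) (z0 - 1/2 + \<i> + 1))"
    by (rule has_contour_integral_periodic_cauchy_integrand_below[OF holo per coeff]
          has_contour_integral_periodic_cauchy_integrand_above[OF holo per coeff]; simp)+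
  with contour_integral_periodic_cauchy_integrand_sides[OF holo per \<open>H z0 \<noteq> 0\<close>] \<open>H z0 \<noteq> 0\<close>
  show False
    by (simp add: contour_integral_unique)
qed

lemma quasiperiodic_eq_theta3:
  assumes t: "Im t > 0" and holo: "F holomorphic_on UNIV" and per: "\<And>z. F (z + 1) = F z"
    and quasi: "\<And>z. Im z = y0 \<Longrightarrow> F (z + t) = exp (- pi * \<i> * t - 2 * pi * \<i> * z) * F z"
  shows "F z = fourier_coeff F 0 * theta3 z t"
proof -
  let ?G = "\<lambda>z. F z - fourier_coeff F 0 * theta3 z t"
  have "fourier_coeff ?G k = 0" for k
    using fourier_coeff_quasiperiodic[OF holo per quasi, where n=k]
    by (simp add: fourier_coeff_diff[OF holo theta3_holomorphic[OF t]] fourier_coeff_theta3[OF t])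
  moreover have "?G holomorphic_on UNIV"
    by (intro holomorphic_intros holo theta3_holomorphic[OF t])
  moreover have "?G (z + 1) = ?G z" for z
    by (simp add: per theta3_plus_1)
  ultimately have "?G z = 0"
    using periodic_entire_eq_0_if_fourier_coeff_eq_0 by blast
  then show ?thesis by simp
qed

section \<open>The modular transformation\<close>

lemma Im_minus_inverse_pos: "Im t > 0 \<Longrightarrow> Im (- 1 / t) > 0"
  by (auto simp: Im_divide intro!: divide_pos_pos add_nonneg_pos)

lemma theta2_0_eq_theta3:
  assumes "Im t > 0"
  shows "theta2 0 t = exp (pi * \<i> * t / 4) * theta3 (t / 2) t"
proof -
  have "exp (pi * \<i> * t * (of_int n + 1/2)^2) * exp (pi * \<i> * 0 * (2 * of_int n + 1)) =
      exp (pi * \<i> * t / 4) * theta3_term t (t / 2) n" for n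
    unfolding theta3_term_def mult_exp_exp by (simp add: power2_eq_square algebra_simps)
  with has_sum_cmult_right[OF has_sum_theta3[OF assms], of "exp (pi * \<i> * t / 4)" "t / 2"] show ?thesis
    unfolding theta2_def by (simp add: infsumI)
qed

lemma theta3_modular:
  assumes t: "Im t > 0"
  shows "exp (- pi * \<i> * z^2 / t) * theta3 (z / t) (- 1 / t) * theta3 0 t = theta3 0 (- 1 / t) * theta3 z t"
proof -
  define T where "T = - 1 / t"
  have T: "Im T > 0" unfolding T_def by (rule Im_minus_inverse_pos[OF t])
  have "t \<noteq> 0" using t by auto
  define F where "F = (\<lambda>z. exp (- pi * \<i> * z^2 / t) * theta3 (z / t) T)"
  have "(\<lambda>z. z / t) holomorphic_on UNIV"
    using \<open>t \<noteq> 0\<close> by (intro holomorphic_intros) auto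
  from holomorphic_on_compose[OF this holomorphic_on_subset[OF theta3_holomorphic[OF T] subset_UNIV]]
  have "(\<lambda>z. theta3 (z / t) T) holomorphic_on UNIV"
    by (simp add: o_def)
  then have holo: "F holomorphic_on UNIV"
    unfolding F_def using \<open>t \<noteq> 0\<close> by (intro holomorphic_intros) auto
  have per: "F (z + 1) = F z" for z
  proof -
    have "theta3 ((z + 1) / t) T = exp (- pi * \<i> * T + 2 * pi * \<i> * (z / t)) * theta3 (z / t) T"
      using theta3_minus_period[OF T, of "z / t"] by (simp add: T_def add_divide_distrib)
    moreover have "exp (- pi * \<i> * (z + 1)^2 / t) * exp (- pi * \<i> * T + 2 * pi * \<i> * (z / t))
        = exp (- pi * \<i> * z^2 / t)"
      unfolding mult_exp_exp T_def using \<open>t \<noteq> 0\<close> by (simp add: power2_eq_square field_simps)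
    ultimately show ?thesis
      unfolding F_def by (simp add: mult.assoc[symmetric])
  qed
  have quasi: "F (z + t) = exp (- pi * \<i> * t - 2 * pi * \<i> * z) * F z" for z
  proof -
    have "theta3 ((z + t) / t) T = theta3 (z / t) T"
      using \<open>t \<noteq> 0\<close> theta3_plus_1[of "z / t" T] by (simp add: add_divide_distrib)
    moreover have "exp (- pi * \<i> * (z + t)^2 / t) = exp (- pi * \<i> * t - 2 * pi * \<i> * z) * exp (- pi * \<i> * z^2 / t)"
      unfolding mult_exp_exp using \<open>t \<noteq> 0\<close> by (simp add: power2_eq_square field_simps)
    ultimately show ?thesis
      unfolding F_def by simp
  qed
  have "F w = fourier_coeff F 0 * theta3 w t" for w
    by (rule quasiperiodic_eq_theta3[OF t holo per quasi])
  from this[of z] this[of 0] show ?thesis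
    by (simp add: F_def T_def)
qed

lemma theta3_modular_theta2:
  assumes t: "Im t > 0"
  shows "theta3 0 (- 1 / t) * theta2 0 t = theta3 (1/2) (- 1 / t) * theta3 0 t"
proof -
  have "t \<noteq> 0" using t by auto
  then have "- pi * \<i> * (t / 2)^2 / t = - pi * \<i> * t / 4" "t / 2 / t = 1 / 2"
    by (simp_all add: power2_eq_square field_simps)
  with theta3_modular[OF t, of "t / 2"]
  have half: "exp (- pi * \<i> * t / 4) * theta3 (1/2) (- 1 / t) * theta3 0 t = theta3 0 (- 1 / t) * theta3 (t / 2) t"
    by (simp only:)
  have "theta3 0 (- 1 / t) * theta2 0 t = exp (pi * \<i> * t / 4) * (theta3 0 (- 1 / t) * theta3 (t / 2) t)"
    by (simp add: theta2_0_eq_theta3[OF t] mult_ac)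
  also have "\<dots> = (exp (pi * \<i> * t / 4) * exp (- pi * \<i> * t / 4)) * theta3 (1/2) (- 1 / t) * theta3 0 t"
    by (simp only: half[symmetric] mult.assoc)
  also have "exp (pi * \<i> * t / 4) * exp (- pi * \<i> * t / 4) = 1"
    by (simp add: mult_exp_exp)
  finally show ?thesis by simp
qed

section \<open>The product formula\<close>

text \<open>
  With the nome p = exp(\<pi>is), nome_odd_power s n is p^(2n+1). It is indexed by integers because
  the shift z \<mapsto> z + s moves the factors of the product to the indices n + 1 and n - 1, down to -1.
  The product theta_product s z is the Jacobi triple product for theta3(z|s) without its factor
  \<Prod>(1 - p^(2n)), which does not depend on z.
\<close>

definition nome_odd_power :: "complex \<Rightarrow> int \<Rightarrow> complex" where
  "nome_odd_power s n = exp (pi * \<i> * s * (2 * of_int n + 1))"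

definition theta_product_factor :: "complex \<Rightarrow> nat \<Rightarrow> complex \<Rightarrow> complex" where
  "theta_product_factor s n z =
     (1 + nome_odd_power s (int n) * exp (2 * pi * \<i> * z)) *
     (1 + nome_odd_power s (int n) * exp (- (2 * pi * \<i> * z)))"

definition theta_product :: "complex \<Rightarrow> complex \<Rightarrow> complex" where
  "theta_product s z = (\<Prod>n. theta_product_factor s n z)"

lemma nome_odd_power_nat: "nome_odd_power s (int n) = exp (pi * \<i> * s) ^ (2 * n + 1)"
proof -
  have "pi * \<i> * s * (2 * of_int (int n) + 1) = of_nat (2 * n + 1) * (pi * \<i> * s)"
    by (simp add: algebra_simps)
  then show ?thesis
    unfolding nome_odd_power_def by (simp only: exp_of_nat_mult)
qed

lemma nome_odd_power_succ: "nome_odd_power s (n + 1) = nome_odd_power s n * exp (2 * pi * \<i> * s)"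
  unfolding nome_odd_power_def mult_exp_exp by (simp add: algebra_simps)

lemma norm_nome_odd_power_le:
  assumes "Im s > 0"
  shows "norm (nome_odd_power s (int n)) \<le> exp (- 2 * pi * Im s) ^ n"
proof -
  have "norm (nome_odd_power s (int n)) = exp (- pi * Im s) * exp (- 2 * pi * Im s * of_nat n)"
    by (simp add: nome_odd_power_def norm_exp_eq_Re mult_exp_exp algebra_simps)
  also have "\<dots> \<le> exp (- 2 * pi * Im s * of_nat n)"
    using assms by (intro mult_left_le_one_le) auto
  also have "\<dots> = exp (- 2 * pi * Im s) ^ n"
    by (simp add: exp_of_nat_mult[symmetric] mult.commute)
  finally show ?thesis .
qed

lemma norm_nome_odd_power_less_1:
  assumes "Im s > 0"
  shows "norm (nome_odd_power s (int n)) < 1"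
  using assms by (simp add: nome_odd_power_def norm_exp_eq_Re mult_pos_pos)

lemma norm_theta_product_factor_minus_1_le:
  assumes s: "Im s > 0" and z: "\<bar>Im z\<bar> \<le> R"
  shows "norm (theta_product_factor s n z - 1) \<le> exp (- 2 * pi * Im s) ^ n * (2 * exp (2 * pi * R) + 1)"
proof -
  define a where "a = nome_odd_power s (int n)"
  define w where "w = exp (2 * pi * \<i> * z)"
  define v where "v = exp (- (2 * pi * \<i> * z))"
  have "w * v = 1" by (simp add: w_def v_def mult_exp_exp)
  then have factor: "theta_product_factor s n z - 1 = a * (w + v + a)"
    by (simp add: theta_product_factor_def a_def w_def v_def algebra_simps)
  have "2 * pi * (- Im z) \<le> 2 * pi * R" "2 * pi * Im z \<le> 2 * pi * R"
    using z by (intro mult_left_mono; simp)+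
  then have "norm w \<le> exp (2 * pi * R)" "norm v \<le> exp (2 * pi * R)"
    by (simp_all add: w_def v_def norm_exp_eq_Re)
  moreover have "norm a \<le> 1"
    using norm_nome_odd_power_less_1[OF s] by (simp add: a_def less_imp_le)
  ultimately have "norm (w + v + a) \<le> 2 * exp (2 * pi * R) + 1"
    using norm_triangle_ineq[of "w + v" a] norm_triangle_ineq[of w v] by simp
  then show ?thesis
    unfolding factor norm_mult
    by (intro mult_mono) (use norm_nome_odd_power_le[OF s] in \<open>auto simp: a_def\<close>)
qed

lemma convergent_prod_one_plus_summable:
  fixes f :: "nat \<Rightarrow> 'a::{real_normed_div_algebra, complete_space, comm_ring_1}"
  assumes "summable (\<lambda>n. norm (f n))"
  shows "convergent_prod (\<lambda>n. 1 + f n)"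
  using assms by (intro abs_convergent_prod_imp_convergent_prod summable_imp_abs_convergent_prod) simp

lemma convergent_prod_theta_product_factor:
  assumes "Im s > 0"
  shows "convergent_prod (\<lambda>n. theta_product_factor s n z)"
proof -
  have "summable (\<lambda>n. exp (- 2 * pi * Im s) ^ n * (2 * exp (2 * pi * \<bar>Im z\<bar>) + 1))"
    using assms by (intro summable_mult2 summable_geometric) auto
  then have "summable (\<lambda>n. norm (theta_product_factor s n z - 1))"
    by (rule summable_comparison_test') (use norm_theta_product_factor_minus_1_le[OF assms] in auto)
  from convergent_prod_one_plus_summable[OF this] show ?thesis by simp
qed

lemma convergent_prod_LIMSEQ_lessThan:
  fixes f :: "nat \<Rightarrow> 'a::real_normed_field"
  assumes "convergent_prod f"
  shows "(\<lambda>N. \<Prod>n<N. f n) \<longlonglongrightarrow> prodinf f"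
proof -
  have "(\<lambda>N. \<Prod>n<Suc N. f n) \<longlonglongrightarrow> prodinf f"
    using convergent_prod_LIMSEQ[OF assms] by (simp add: lessThan_Suc_atMost)
  then show ?thesis by (rule LIMSEQ_imp_Suc)
qed

lemma theta_product_holomorphic:
  assumes s: "Im s > 0"
  shows "theta_product s holomorphic_on UNIV"
proof (rule holomorphic_uniform_sequence[where f = "\<lambda>N z. \<Prod>n<N. theta_product_factor s n z"])
  fix N
  show "(\<lambda>z. \<Prod>n<N. theta_product_factor s n z) holomorphic_on UNIV"
    unfolding theta_product_factor_def by (intro holomorphic_intros)
next
  fix x :: complex
  have majorant: "summable (\<lambda>n. exp (- 2 * pi * Im s) ^ n * (2 * exp (2 * pi * (\<bar>Im x\<bar> + 1)) + 1))"
    using s by (intro summable_mult2 summable_geometric) auto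
  have "uniformly_convergent_on (cball x 1) (\<lambda>N z. \<Sum>n<N. norm (theta_product_factor s n z - 1))"
    by (rule Weierstrass_m_test'[OF _ majorant])
       (use norm_theta_product_factor_minus_1_le[OF s] cball_subset_strip[of x 1] in auto)
  then have "uniformly_convergent_on (cball x 1) (\<lambda>N z. \<Prod>n<N. theta_product_factor s n z)"
    by (intro uniformly_convergent_on_prod') (auto simp: theta_product_factor_def intro!: continuous_intros)
  then obtain l where l: "uniform_limit (cball x 1) (\<lambda>N z. \<Prod>n<N. theta_product_factor s n z) l sequentially"
    by (auto simp: uniformly_convergent_on_def)
  moreover have "l z = theta_product s z" if "z \<in> cball x 1" for z
    using LIMSEQ_unique[OF tendsto_uniform_limitI[OF l that]
        convergent_prod_LIMSEQ_lessThan[OF convergent_prod_theta_product_factor[OF s]]]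
    by (simp add: theta_product_def)
  ultimately have "uniform_limit (cball x 1) (\<lambda>N z. \<Prod>n<N. theta_product_factor s n z) (theta_product s) sequentially"
    by (metis (mono_tags, lifting) uniform_limit_cong')
  then show "\<exists>d>0. cball x d \<subseteq> UNIV \<and>
      uniform_limit (cball x d) (\<lambda>N z. \<Prod>n<N. theta_product_factor s n z) (theta_product s) sequentially"
    by (intro exI[of _ 1]) auto
qed auto

lemma theta_product_plus_1: "theta_product s (z + 1) = theta_product s z"
proof -
  have "exp (2 * pi * \<i> * (z + 1)) = exp (2 * pi * \<i> * z)"
    using exp_two_pi_i_int[of 1] by (simp add: distrib_left exp_add)
  then show ?thesis
    by (simp add: theta_product_def theta_product_factor_def exp_minus)
qed

lemma prod_lessThan_shift_telescope:
  fixes A B :: "int \<Rightarrow> 'a::comm_semiring_1"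
  shows "A 0 * (\<Prod>n<Suc N. A (int n + 1) * B (int n - 1)) * B (int N)
           = A (int N + 1) * B (-1) * (\<Prod>n<Suc N. A (int n) * B (int n))"
proof (induction N)
  case 0
  then show ?case by (simp add: mult_ac)
next
  case (Suc N)
  have "A 0 * (\<Prod>n<Suc (Suc N). A (int n + 1) * B (int n - 1)) * B (int (Suc N))
      = (A 0 * (\<Prod>n<Suc N. A (int n + 1) * B (int n - 1)) * B (int N)) * (A (int (Suc N) + 1) * B (int (Suc N)))"
    by (simp add: mult_ac)
  also have "\<dots> = A (int N + 1) * B (-1) * (\<Prod>n<Suc N. A (int n) * B (int n)) * (A (int (Suc N) + 1) * B (int (Suc N)))"
    by (simp only: Suc)
  also have "\<dots> = A (int (Suc N) + 1) * B (-1) * (\<Prod>n<Suc (Suc N). A (int n) * B (int n))"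
    by (simp add: mult_ac add_ac)
  finally show ?case .
qed

lemma LIMSEQ_nome_odd_power:
  assumes "Im s > 0"
  shows "(\<lambda>N. nome_odd_power s (int N)) \<longlonglongrightarrow> 0"
proof (rule Lim_null_comparison[OF _ LIMSEQ_power_zero])
  show "\<forall>\<^sub>F N in sequentially. norm (nome_odd_power s (int N)) \<le> exp (- 2 * pi * Im s) ^ N"
    using norm_nome_odd_power_le[OF assms] by auto
  show "norm (exp (- 2 * pi * Im s)) < 1"
    using assms by simp
qed

lemma theta_product_factor_plus_period:
  "theta_product_factor s n (z + s) =
     (1 + nome_odd_power s (int n + 1) * exp (2 * pi * \<i> * z)) *
     (1 + nome_odd_power s (int n - 1) / exp (2 * pi * \<i> * z))"
proof -
  define w where "w = exp (2 * pi * \<i> * z)"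
  define x2 where "x2 = exp (2 * pi * \<i> * s)"
  have "w \<noteq> 0" "x2 \<noteq> 0" by (simp_all add: w_def x2_def)
  have "exp (2 * pi * \<i> * (z + s)) = w * x2"
    by (simp add: w_def x2_def distrib_left exp_add)
  moreover have "nome_odd_power s (int n) * (w * x2) = nome_odd_power s (int n + 1) * w"
    using nome_odd_power_succ[of s "int n"] by (simp add: x2_def algebra_simps)
  moreover have "nome_odd_power s (int n) * inverse (w * x2) = nome_odd_power s (int n - 1) / w"
    using nome_odd_power_succ[of s "int n - 1"] \<open>w \<noteq> 0\<close> \<open>x2 \<noteq> 0\<close>
    by (simp add: x2_def field_simps)
  ultimately show ?thesis
    unfolding theta_product_factor_def exp_minus w_def[symmetric] by simp
qed

lemma theta_product_plus_period_relation:
  assumes s: "Im s > 0"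
  shows "(1 + nome_odd_power s 0 * exp (2 * pi * \<i> * z)) * theta_product s (z + s)
           = (1 + nome_odd_power s (-1) / exp (2 * pi * \<i> * z)) * theta_product s z"
proof -
  define A where "A = (\<lambda>n. 1 + nome_odd_power s n * exp (2 * pi * \<i> * z))"
  define B where "B = (\<lambda>n. 1 + nome_odd_power s n / exp (2 * pi * \<i> * z))"
  have lim: "(\<lambda>N. \<Prod>n<Suc N. theta_product_factor s n t) \<longlonglongrightarrow> theta_product s t" for t
    unfolding theta_product_def
    by (rule LIMSEQ_Suc[OF convergent_prod_LIMSEQ_lessThan[OF convergent_prod_theta_product_factor[OF s]]])
  have lim_A: "(\<lambda>N. A (int N + 1)) \<longlonglongrightarrow> 1" and lim_B: "(\<lambda>N. B (int N)) \<longlonglongrightarrow> 1"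
    using tendsto_add[OF tendsto_const tendsto_mult[OF LIMSEQ_Suc[OF LIMSEQ_nome_odd_power[OF s]] tendsto_const]]
      tendsto_add[OF tendsto_const tendsto_divide[OF LIMSEQ_nome_odd_power[OF s] tendsto_const]]
    by (simp_all add: A_def B_def add.commute)
  have shift: "theta_product_factor s n (z + s) = A (int n + 1) * B (int n - 1)" for n
    by (simp only: theta_product_factor_plus_period A_def B_def)
  have unshifted: "theta_product_factor s n z = A (int n) * B (int n)" for n
    by (simp add: theta_product_factor_def A_def B_def exp_minus divide_inverse)
  have telescope: "A 0 * (\<Prod>n<Suc N. theta_product_factor s n (z + s)) * B (int N)
      = A (int N + 1) * B (-1) * (\<Prod>n<Suc N. theta_product_factor s n z)" for N
    unfolding shift unshifted by (rule prod_lessThan_shift_telescope)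
  have "(\<lambda>N. A 0 * (\<Prod>n<Suc N. theta_product_factor s n (z + s)) * B (int N))
      \<longlonglongrightarrow> A 0 * theta_product s (z + s) * 1"
    by (intro tendsto_mult tendsto_const lim lim_B)
  moreover have "(\<lambda>N. A 0 * (\<Prod>n<Suc N. theta_product_factor s n (z + s)) * B (int N))
      \<longlonglongrightarrow> 1 * B (-1) * theta_product s z"
    unfolding telescope by (intro tendsto_mult tendsto_const lim lim_A)
  ultimately have "A 0 * theta_product s (z + s) * 1 = 1 * B (-1) * theta_product s z"
    by (rule LIMSEQ_unique)
  then show ?thesis
    by (simp add: A_def B_def)
qed

lemma theta_product_plus_period:
  assumes s: "Im s > 0" and z: "Im z = 0"
  shows "theta_product s (z + s) = exp (- pi * \<i> * s - 2 * pi * \<i> * z) * theta_product s z"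
proof -
  define w where "w = exp (2 * pi * \<i> * z)"
  define x where "x = exp (pi * \<i> * s)"
  have "w \<noteq> 0" "x \<noteq> 0" "norm w = 1"
    using z by (simp_all add: w_def x_def norm_exp_eq_Re)
  have "norm (nome_odd_power s 0 * w) < 1"
    using norm_nome_odd_power_less_1[OF s, of 0] \<open>norm w = 1\<close> by (simp add: norm_mult)
  then have "1 + nome_odd_power s 0 * w \<noteq> 0"
    by (auto simp: add_eq_0_iff)
  have "x * w * exp (- pi * \<i> * s - 2 * pi * \<i> * z) = 1"
    unfolding x_def w_def mult_exp_exp by simp
  then have e: "exp (- pi * \<i> * s - 2 * pi * \<i> * z) = inverse (x * w)"
    by (rule inverse_unique[symmetric])
  have "nome_odd_power s 0 = x" "nome_odd_power s (-1) = inverse x"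
    unfolding nome_odd_power_def x_def by (simp_all add: exp_minus)
  then have "1 + nome_odd_power s (-1) / w = 1 + inverse (x * w)"
    "(1 + nome_odd_power s 0 * w) * inverse (x * w) = inverse (x * w) + 1"
    using \<open>w \<noteq> 0\<close> \<open>x \<noteq> 0\<close> by (simp_all add: field_simps)
  then have "1 + nome_odd_power s (-1) / w = (1 + nome_odd_power s 0 * w) * exp (- pi * \<i> * s - 2 * pi * \<i> * z)"
    unfolding e by (simp add: add.commute)
  with theta_product_plus_period_relation[OF s, of z] \<open>1 + nome_odd_power s 0 * w \<noteq> 0\<close> show ?thesis
    by (simp add: w_def mult.assoc)
qed

lemma theta_product_eq_theta3:
  "Im s > 0 \<Longrightarrow> theta_product s z = fourier_coeff (theta_product s) 0 * theta3 z s"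
  by (rule quasiperiodic_eq_theta3[OF _ theta_product_holomorphic theta_product_plus_1 theta_product_plus_period])

definition odd_power_product :: "complex \<Rightarrow> complex" where
  "odd_power_product p = (\<Prod>m. 1 + p ^ (2 * m + 1))"

lemma convergent_prod_odd_power:
  fixes p :: complex
  assumes "norm p < 1"
  shows "convergent_prod (\<lambda>m. 1 + p ^ (2 * m + 1))"
proof -
  have "norm (p ^ (2 * m + 1)) \<le> norm p ^ m" for m
    using assms by (simp add: norm_power power_decreasing del: power_Suc)
  then have "summable (\<lambda>m. norm (p ^ (2 * m + 1)))"
    by (intro summable_comparison_test'[OF summable_geometric[of "norm p"]]) (use assms in auto)
  from convergent_prod_one_plus_summable[OF this] show ?thesis .
qed

lemma odd_power_product_nonzero:
  assumes "norm p < 1"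
  shows "odd_power_product p \<noteq> 0"
  unfolding odd_power_product_def
proof (rule prodinf_nonzero[OF convergent_prod_odd_power[OF assms]])
  fix m
  have "norm p ^ (2 * m + 1) \<le> norm p ^ 1"
    using assms by (intro power_decreasing) auto
  with assms have "norm (p ^ (2 * m + 1)) < 1"
    by (simp add: norm_power del: power_Suc)
  then show "1 + p ^ (2 * m + 1) \<noteq> 0"
    by (auto simp: add_eq_0_iff)
qed

lemma theta_product_0:
  assumes "Im s > 0"
  shows "theta_product s 0 = odd_power_product (exp (pi * \<i> * s)) ^ 2"
proof -
  define p where "p = exp (pi * \<i> * s)"
  have "norm p < 1"
    using assms by (simp add: p_def norm_exp_eq_Re)
  have "theta_product s 0 = (\<Prod>n. (1 + p ^ (2 * n + 1)) * (1 + p ^ (2 * n + 1)))"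
    by (simp add: theta_product_def theta_product_factor_def nome_odd_power_nat p_def)
  also have "\<dots> = odd_power_product p * odd_power_product p"
    unfolding odd_power_product_def
    by (rule prodinf_mult[symmetric, OF convergent_prod_odd_power convergent_prod_odd_power]; fact)
  finally show ?thesis
    by (simp add: p_def power2_eq_square)
qed

lemma theta_product_half:
  assumes "Im s > 0"
  shows "theta_product s (1/2) = odd_power_product (- exp (pi * \<i> * s)) ^ 2"
proof -
  define p where "p = - exp (pi * \<i> * s)"
  have "norm p < 1"
    using assms by (simp add: p_def norm_exp_eq_Re)
  have "exp (2 * pi * \<i> * (1/2)) = -1" "exp (- (2 * pi * \<i> * (1/2))) = -1"
    by (simp_all add: exp_minus)
  then have "theta_product s (1/2) = (\<Prod>n. (1 + p ^ (2 * n + 1)) * (1 + p ^ (2 * n + 1)))"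
    by (simp add: theta_product_def theta_product_factor_def nome_odd_power_nat p_def power_minus_odd
        del: power_Suc)
  also have "\<dots> = odd_power_product p * odd_power_product p"
    unfolding odd_power_product_def
    by (rule prodinf_mult[symmetric, OF convergent_prod_odd_power convergent_prod_odd_power]; fact)
  finally show ?thesis
    by (simp add: p_def power2_eq_square)
qed

lemma theta3_0_nonzero:
  assumes "Im s > 0"
  shows "theta3 0 s \<noteq> 0"
proof -
  have "norm (exp (pi * \<i> * s)) < 1"
    using assms by (simp add: norm_exp_eq_Re)
  then show ?thesis
    using theta_product_eq_theta3[OF assms, of 0] theta_product_0[OF assms] odd_power_product_nonzero
    by auto
qed

lemma prod_one_plus_power_mult_odd:
  fixes p :: "'a::comm_ring_1"
  shows "(\<Prod>n<2*N. 1 + p ^ Suc n) * (\<Prod>m<N. 1 + (- p) ^ (2*m+1)) =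
         (\<Prod>n<2*N. 1 + (- p) ^ Suc n) * (\<Prod>m<N. 1 + p ^ (2*m+1))"
proof (induction N)
  case 0
  then show ?case by simp
next
  case (Suc N)
  have double: "2 * Suc N = Suc (Suc (2 * N))" by simp
  have "(- p) ^ Suc (2 * N) = - (p ^ Suc (2 * N))" "(- p) ^ Suc (Suc (2 * N)) = p ^ Suc (Suc (2 * N))"
    by (simp_all add: power_minus_odd power_minus_even)
  with Suc show ?case
    unfolding double by (simp add: mult_ac)
qed

text \<open>
  Euler's identity: \<epsilon>(p) and \<epsilon>(-p) share their factors of even index, and their factors of odd
  index form odd_power_product p and odd_power_product (-p).
\<close>

lemma eps_mult_odd_power_product:
  assumes "norm p < 1"
  shows "eps p * odd_power_product (- p) = eps (- p) * odd_power_product p"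
proof -
  have conv: "convergent_prod (\<lambda>n. 1 + q ^ Suc n)" if "norm q < 1" for q :: complex
  proof -
    have "summable (\<lambda>n. norm q * norm q ^ n)"
      using that by (intro summable_mult summable_geometric) simp
    then have "summable (\<lambda>n. norm (q ^ Suc n))"
      by (simp add: norm_mult norm_power)
    from convergent_prod_one_plus_summable[OF this] show ?thesis .
  qed
  have lim: "(\<lambda>N. \<Prod>n<2*N. f n) \<longlonglongrightarrow> prodinf f" if "convergent_prod f" for f :: "nat \<Rightarrow> complex"
    using LIMSEQ_subseq_LIMSEQ[OF convergent_prod_LIMSEQ_lessThan[OF that], of "\<lambda>N. 2 * N"]
    by (simp add: o_def strict_mono_def)
  have "(\<lambda>N. (\<Prod>n<2*N. 1 + p ^ Suc n) * (\<Prod>m<N. 1 + (- p) ^ (2*m+1)))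
      \<longlonglongrightarrow> eps p * odd_power_product (- p)"
    unfolding eps_def odd_power_product_def
    by (intro tendsto_mult lim conv convergent_prod_LIMSEQ_lessThan convergent_prod_odd_power) (use assms in auto)
  moreover have "(\<lambda>N. (\<Prod>n<2*N. 1 + p ^ Suc n) * (\<Prod>m<N. 1 + (- p) ^ (2*m+1)))
      \<longlonglongrightarrow> eps (- p) * odd_power_product p"
    unfolding prod_one_plus_power_mult_odd eps_def odd_power_product_def
    by (intro tendsto_mult lim conv convergent_prod_LIMSEQ_lessThan convergent_prod_odd_power) (use assms in auto)
  ultimately show ?thesis
    by (rule LIMSEQ_unique)
qed

lemma theta3_mult_eps_square:
  assumes "Im s > 0"
  shows "theta3 0 s * eps (- exp (pi * \<i> * s)) ^ 2 = theta3 (1/2) s * eps (exp (pi * \<i> * s)) ^ 2"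
proof -
  define p where "p = exp (pi * \<i> * s)"
  have "norm p < 1" "norm (- p) < 1"
    using assms by (simp_all add: p_def norm_exp_eq_Re)
  have "odd_power_product (- p) ^ 2 * theta3 0 s = odd_power_product p ^ 2 * theta3 (1/2) s"
    using theta_product_eq_theta3[OF assms, of 0] theta_product_eq_theta3[OF assms, of "1/2"]
    by (simp add: theta_product_0[OF assms, folded p_def] theta_product_half[OF assms, folded p_def])
  moreover have "eps p ^ 2 * odd_power_product (- p) ^ 2 = eps (- p) ^ 2 * odd_power_product p ^ 2"
    using eps_mult_odd_power_product[OF \<open>norm p < 1\<close>] by (metis power_mult_distrib)
  ultimately have "odd_power_product p ^ 2 * (theta3 0 s * eps (- p) ^ 2)
      = odd_power_product p ^ 2 * (theta3 (1/2) s * eps p ^ 2)"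
    by (metis mult.commute mult.left_commute)
  then show ?thesis
    using odd_power_product_nonzero[OF \<open>norm p < 1\<close>] by (simp add: p_def)
qed

section \<open>Duplication formulas\<close>

lemma infsum_mult_infsum:
  fixes f :: "'a \<Rightarrow> complex" and g :: "'b \<Rightarrow> complex"
  assumes f: "f summable_on UNIV" and g: "g summable_on UNIV"
  shows "(\<lambda>(m, n). f m * g n) summable_on UNIV"
    and "(\<Sum>\<^sub>\<infinity>m. f m) * (\<Sum>\<^sub>\<infinity>n. g n) = (\<Sum>\<^sub>\<infinity>(m, n). f m * g n)"
proof -
  have f_abs: "(\<lambda>m. norm (f m)) summable_on UNIV" and g_abs: "(\<lambda>n. norm (g n)) summable_on UNIV"
    using f g summable_on_iff_abs_summable_on_complex by blast+
  have "(\<lambda>(m, n). norm (f m) * norm (g n)) summable_on Sigma UNIV (\<lambda>_. UNIV)"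
  proof (rule summable_on_SigmaI)
    show "((\<lambda>n. (\<lambda>(m, n). norm (f m) * norm (g n)) (m, n)) has_sum norm (f m) * infsum (\<lambda>n. norm (g n)) UNIV) UNIV"
      for m
      using has_sum_cmult_right[OF has_sum_infsum[OF g_abs], of "norm (f m)"] by simp
    show "(\<lambda>m. norm (f m) * infsum (\<lambda>n. norm (g n)) UNIV) summable_on UNIV"
      by (rule summable_on_cmult_left[OF f_abs])
  qed auto
  then have "Infinite_Sum.abs_summable_on (\<lambda>(m, n). f m * g n) UNIV"
    by (simp add: case_prod_unfold norm_mult)
  then show summable: "(\<lambda>(m, n). f m * g n) summable_on UNIV"
    by (rule abs_summable_summable)
  have "(\<Sum>\<^sub>\<infinity>(m, n). f m * g n) = (\<Sum>\<^sub>\<infinity>m. \<Sum>\<^sub>\<infinity>n. f m * g n)"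
    using infsum_Sigma'_banach[of "\<lambda>m n. f m * g n" UNIV "\<lambda>_. UNIV"] summable by simp
  also have "\<dots> = (\<Sum>\<^sub>\<infinity>m. f m * (\<Sum>\<^sub>\<infinity>n. g n))"
    by (simp add: infsumI[OF has_sum_cmult_right[OF has_sum_infsum[OF g]]])
  also have "\<dots> = (\<Sum>\<^sub>\<infinity>m. f m) * (\<Sum>\<^sub>\<infinity>n. g n)"
    by (rule infsumI[OF has_sum_cmult_left[OF has_sum_infsum[OF f]]])
  finally show "(\<Sum>\<^sub>\<infinity>m. f m) * (\<Sum>\<^sub>\<infinity>n. g n) = (\<Sum>\<^sub>\<infinity>(m, n). f m * g n)" ..
qed

lemma theta3_mult_theta3:
  assumes "Im t > 0"
  shows "theta3 z t * theta3 w t = (\<Sum>\<^sub>\<infinity>x. theta3_term t z (fst x) * theta3_term t w (snd x))"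
    and "(\<lambda>x. theta3_term t z (fst x) * theta3_term t w (snd x)) summable_on UNIV"
  using infsum_mult_infsum[OF summable_on_theta3_term[OF assms] summable_on_theta3_term[OF assms], of z w]
  by (simp_all add: theta3_eq_infsum case_prod_unfold)

text \<open>
  The pairs (m, n) with m + n even are exactly the pairs (a + b, a - b); the factor
  1 + exp(\<pi>i(m + n)) is 2 on them and 0 elsewhere.
\<close>

lemma infsum_parity_reindex:
  fixes F :: "int \<times> int \<Rightarrow> complex"
  shows "(\<Sum>\<^sub>\<infinity>x. F x * (1 + exp (pi * \<i> * of_int (fst x + snd x))))
           = 2 * (\<Sum>\<^sub>\<infinity>x. F (fst x + snd x, fst x - snd x))"
proof -
  define h :: "int \<times> int \<Rightarrow> int \<times> int" where "h = (\<lambda>(a, b). (a + b, a - b))"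
  have "inj h"
    unfolding h_def inj_def by auto
  have even: "exp (pi * \<i> * of_int (2 * k)) = 1" and odd: "exp (pi * \<i> * of_int (2 * k + 1)) = -1" for k
    using exp_two_pi_i_int[of k] by (simp_all add: algebra_simps exp_add)
  have "F x * (1 + exp (pi * \<i> * of_int (fst x + snd x))) = 0" if "x \<notin> range h" for x
  proof -
    obtain m n where x: "x = (m, n)" by (cases x)
    have "odd (m + n)"
    proof
      assume "even (m + n)"
      then obtain k where "m + n = 2 * k" by (rule evenE)
      then have "x = h (k, m - k)" by (simp add: h_def x)
      with that show False by auto
    qed
    then obtain k where "m + n = 2 * k + 1" by (rule oddE)
    then have "exp (pi * \<i> * of_int (fst x + snd x)) = -1"
      by (simp only: x fst_conv snd_conv odd)
    then show ?thesis by simp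
  qed
  then have "(\<Sum>\<^sub>\<infinity>x. F x * (1 + exp (pi * \<i> * of_int (fst x + snd x))))
      = (\<Sum>\<^sub>\<infinity>x\<in>range h. F x * (1 + exp (pi * \<i> * of_int (fst x + snd x))))"
    by (intro infsum_cong_neutral) auto
  also have "\<dots> = (\<Sum>\<^sub>\<infinity>y. F (h y) * (1 + exp (pi * \<i> * of_int (fst (h y) + snd (h y)))))"
    using infsum_reindex[OF inj_on_subset[OF \<open>inj h\<close> subset_UNIV]] by (simp add: o_def)
  also have "\<dots> = (\<Sum>\<^sub>\<infinity>y. 2 * F (fst y + snd y, fst y - snd y))"
  proof (rule infsum_cong)
    fix y
    have "fst (h y) + snd (h y) = 2 * fst y"
      by (simp add: h_def case_prod_unfold)
    then have "exp (pi * \<i> * of_int (fst (h y) + snd (h y))) = 1"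
      by (simp only: even)
    then show "F (h y) * (1 + exp (pi * \<i> * of_int (fst (h y) + snd (h y)))) = 2 * F (fst y + snd y, fst y - snd y)"
      by (simp add: h_def case_prod_unfold)
  qed
  also have "\<dots> = 2 * (\<Sum>\<^sub>\<infinity>y. F (fst y + snd y, fst y - snd y))"
    by (rule infsum_cmult_right')
  finally show ?thesis .
qed

lemma theta3_term_plus_half: "theta3_term t (z + 1/2) n = theta3_term t z n * exp (pi * \<i> * of_int n)"
  unfolding theta3_term_def mult_exp_exp by (simp add: algebra_simps)

lemma theta3_term_add_diff:
  "theta3_term t z (a + b) * theta3_term t w (a - b) = theta3_term (2 * t) (z + w) a * theta3_term (2 * t) (z - w) b"
  unfolding theta3_term_def mult_exp_exp by (simp add: power2_eq_square algebra_simps)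

lemma theta3_mult_theta3_plus_half:
  assumes "Im t > 0"
  shows "theta3 z t * theta3 w t + theta3 (z + 1/2) t * theta3 (w + 1/2) t
           = 2 * (theta3 (z + w) (2 * t) * theta3 (z - w) (2 * t))"
proof -
  let ?T = "theta3_term t" and ?D = "theta3_term (2 * t)"
  have "Im (2 * t) > 0" using assms by simp
  have "theta3 z t * theta3 w t + theta3 (z + 1/2) t * theta3 (w + 1/2) t
      = (\<Sum>\<^sub>\<infinity>x. ?T z (fst x) * ?T w (snd x) + ?T (z + 1/2) (fst x) * ?T (w + 1/2) (snd x))"
    unfolding theta3_mult_theta3[OF assms] by (rule infsum_add[symmetric]; rule theta3_mult_theta3[OF assms])
  also have "\<dots> = (\<Sum>\<^sub>\<infinity>x. ?T z (fst x) * ?T w (snd x) * (1 + exp (pi * \<i> * of_int (fst x + snd x))))"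
    by (intro infsum_cong) (simp add: theta3_term_plus_half distrib_left exp_add algebra_simps)
  also have "\<dots> = 2 * (\<Sum>\<^sub>\<infinity>x. ?T z (fst x + snd x) * ?T w (fst x - snd x))"
    using infsum_parity_reindex[where F="\<lambda>x. ?T z (fst x) * ?T w (snd x)"] by (simp only: fst_conv snd_conv)
  also have "\<dots> = 2 * (\<Sum>\<^sub>\<infinity>x. ?D (z + w) (fst x) * ?D (z - w) (snd x))"
    by (simp only: theta3_term_add_diff)
  also have "\<dots> = 2 * (theta3 (z + w) (2 * t) * theta3 (z - w) (2 * t))"
    by (simp only: theta3_mult_theta3[OF \<open>Im (2 * t) > 0\<close>])
  finally show ?thesis .
qed

lemma theta3_square_add_square:
  assumes "Im t > 0"
  shows "theta3 0 t ^ 2 + theta3 (1/2) t ^ 2 = 2 * theta3 0 (2 * t) ^ 2"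
  using theta3_mult_theta3_plus_half[OF assms, of 0 0] by (simp add: power2_eq_square)

lemma theta3_0_mult_theta3_half:
  assumes "Im t > 0"
  shows "theta3 0 t * theta3 (1/2) t = theta3 (1/2) (2 * t) ^ 2"
proof -
  have "theta3 1 t = theta3 0 t" "theta3 (- 1/2) (2 * t) = theta3 (1/2) (2 * t)"
    using theta3_plus_1[of 0 t] theta3_plus_1[of "- 1/2" "2 * t"] by simp_all
  then show ?thesis
    using theta3_mult_theta3_plus_half[OF assms, of 0 "1/2"] by (simp add: power2_eq_square mult.commute)
qed

lemma theta2_div_theta3_modular:
  assumes "Im t > 0"
  shows "theta2 0 t / theta3 0 t = theta3 (1/2) (- 1 / t) / theta3 0 (- 1 / t)"
  using theta3_modular_theta2[OF assms] theta3_0_nonzero[OF assms]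
    theta3_0_nonzero[OF Im_minus_inverse_pos[OF assms]]
  by (simp add: field_simps)

lemma ratio_square_quartic_identity:
  fixes a b A B E F :: complex
  assumes "a * E^2 = b * F^2" "a^2 + b^2 = 2 * A^2" "a * b = B^2" "a \<noteq> 0" "A \<noteq> 0"
  shows "2 * E^2 * F^2 - (B / A)^2 * (E^4 + F^4) = 0"
proof -
  have "(B / A)^2 * A^2 = a * b"
    using assms(3,5) by (simp add: power_divide)
  with assms(1,2) have "a^2 * A^2 * (2 * E^2 * F^2 - (B / A)^2 * (E^4 + F^4)) = 0"
    by algebra
  with assms(4,5) show ?thesis
    by simp
qed

theorem lemma2p4:
  fixes \<tau> q :: complex
  assumes "Im \<tau> > 0"
    and "q = exp (pi * \<i> * ((4 * \<tau> - 1) / (4 * \<tau>)))"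
  shows "2 * (eps q)^2 * (eps_bar q)^2
         - (theta2 0 (2 * \<tau>) / theta3 0 (2 * \<tau>))^2 * ((eps q)^4 + (eps_bar q)^4) = 0"
proof -
  define \<sigma> where "\<sigma> = - 1 / (4 * \<tau>)"
  have "\<tau> \<noteq> 0" "Im (2 * \<tau>) > 0"
    using assms(1) by auto
  have \<sigma>: "Im \<sigma> > 0"
    using Im_minus_inverse_pos[of "4 * \<tau>"] assms(1) by (simp add: \<sigma>_def)
  then have \<sigma>2: "Im (2 * \<sigma>) > 0"
    by simp
  have "pi * \<i> * ((4 * \<tau> - 1) / (4 * \<tau>)) = pi * \<i> + pi * \<i> * \<sigma>"
    using \<open>\<tau> \<noteq> 0\<close> by (simp add: \<sigma>_def field_simps)
  then have "q = - exp (pi * \<i> * \<sigma>)"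
    by (simp add: assms(2) exp_add)
  then have product: "theta3 0 \<sigma> * eps q ^ 2 = theta3 (1/2) \<sigma> * eps_bar q ^ 2"
    using theta3_mult_eps_square[OF \<sigma>] by (simp add: eps_bar_def)
  have "- 1 / (2 * \<tau>) = 2 * \<sigma>"
    using \<open>\<tau> \<noteq> 0\<close> by (simp add: \<sigma>_def field_simps)
  with theta2_div_theta3_modular[OF \<open>Im (2 * \<tau>) > 0\<close>]
  have "theta2 0 (2 * \<tau>) / theta3 0 (2 * \<tau>) = theta3 (1/2) (2 * \<sigma>) / theta3 0 (2 * \<sigma>)"
    by simp
  with ratio_square_quartic_identity[OF product theta3_square_add_square[OF \<sigma>]
      theta3_0_mult_theta3_half[OF \<sigma>] theta3_0_nonzero[OF \<sigma>] theta3_0_nonzero[OF \<sigma>2]]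
  show ?thesis
    by simp
qed

end
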